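(* Let $H$ be a binary Hamming code of length $n=2^k-1$ and let $\lambda:H\to\{0,1\}$ be a Boolean function with $\lambda(0^n)=0$ that is not linear. Let $V_H^\lambda=\{(x+y,\ |x|+\lambda(y),\ x)\mid x\in F^n,\ y\in H\}$. For $y'\in H$, the codeword $z=(y',\lambda(y'),0^n)$ belongs to $\mathrm{Tr}(V_H^\lambda)$ if and only if there exist $\pi\in \mathrm{Sym}(H)$ and $u\in F^n$ such that for all $y\in H$ $$\lambda(y')+\lambda(y)+\lambda(y'+\pi(y))=u\cdot y .$$
   Context: $F^n$ is the space of binary vectors of length $n$; $|x|=x_1+\dots+x_n\pmod 2$; $u\cdot y$ is the scalar product over $\mathbb{F}_2$. Permutations act on vectors by permuting coordinates. For a code $D\subseteq F^m$, $\mathrm{Sym}(D)=\{\pi\in S_m\mid \pi(D)=D\}$ and the translator is $\mathrm{Tr}(D)=\{z\in D\mid \exists \pi\in S_m:\ z+\pi(D)=D\}$. *)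

theory Defs
  imports "HOL-Combinatorics.Permutations"
begin

text \<open>Binary vectors of length n: functions nat => bool vanishing outside {..<n}.\<close>
type_synonym bvec = "nat \<Rightarrow> bool"

definition bxor :: "bool \<Rightarrow> bool \<Rightarrow> bool" where
  "bxor a b = (a \<noteq> b)"

definition Fn :: "nat \<Rightarrow> bvec set" where
  "Fn n = {x. \<forall>i. n \<le> i \<longrightarrow> \<not> x i}"

definition zerov :: bvec where
  "zerov = (\<lambda>_. False)"

definition vadd :: "bvec \<Rightarrow> bvec \<Rightarrow> bvec" where
  "vadd x y = (\<lambda>i. bxor (x i) (y i))"

text \<open>Weight parity |x| (as a bit) and scalar product over F_2.\<close>
definition wpar :: "nat \<Rightarrow> bvec \<Rightarrow> bool" where
  "wpar n x = odd (card {i. i < n \<and> x i})"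

definition sprod :: "nat \<Rightarrow> bvec \<Rightarrow> bvec \<Rightarrow> bool" where
  "sprod n u y = odd (card {i. i < n \<and> u i \<and> y i})"

definition pact :: "(nat \<Rightarrow> nat) \<Rightarrow> bvec \<Rightarrow> bvec" where
  "pact \<pi> x = (\<lambda>i. x (inv \<pi> i))"

definition Sym :: "nat \<Rightarrow> bvec set \<Rightarrow> (nat \<Rightarrow> nat) set" where
  "Sym m D = {\<pi>. \<pi> permutes {..<m} \<and> pact \<pi> ` D = D}"

definition Tr :: "nat \<Rightarrow> bvec set \<Rightarrow> bvec set" where
  "Tr m D = {z \<in> D. \<exists>\<pi>. \<pi> permutes {..<m} \<and> vadd z ` (pact \<pi> ` D) = D}"

text \<open>Binary Hamming code of length n = 2^k - 1: the kernel of a parity check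
  matrix whose columns c 0, ..., c (n-1) are exactly the nonzero vectors of F^k.\<close>
definition hamming_code :: "nat \<Rightarrow> bvec set \<Rightarrow> bool" where
  "hamming_code k H \<longleftrightarrow> (\<exists>c :: nat \<Rightarrow> bvec.
      bij_betw c {..<2^k - 1} (Fn k - {zerov}) \<and>
      H = {x \<in> Fn (2^k - 1). \<forall>j<k. even (card {i. i < 2^k - 1 \<and> x i \<and> c i j})})"

definition linear_on :: "bvec set \<Rightarrow> (bvec \<Rightarrow> bool) \<Rightarrow> bool" where
  "linear_on H f \<longleftrightarrow> (\<forall>y\<in>H. \<forall>y'\<in>H. f (vadd y y') = bxor (f y) (f y'))"

text \<open>Concatenation (a, b, c) with a, c of length n and b a single bit:
  coordinates 0..n-1, n, n+1..2n.\<close>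
definition cat3 :: "nat \<Rightarrow> bvec \<Rightarrow> bool \<Rightarrow> bvec \<Rightarrow> bvec" where
  "cat3 n a b c = (\<lambda>i. if i < n then a i else if i = n then b
                       else if i \<le> 2*n then c (i - n - 1) else False)"

definition VHl :: "nat \<Rightarrow> bvec set \<Rightarrow> (bvec \<Rightarrow> bool) \<Rightarrow> bvec set" where
  "VHl n H lam = {cat3 n (vadd x y) (bxor (wpar n x) (lam y)) x | x y. x \<in> Fn n \<and> y \<in> H}"

end

(* If z + \<sigma>(V) = V for some z in V = V_H^\<lambda>, then \<sigma> maps the dual code of V into itself.
   Because \<lambda> is not linear, that dual consists exactly of the words (A, 0, A) with A in the dual
   of H; and since the columns of a Hamming check matrix are distinct and nonzero, these words
   separate the middle coordinate and the n pairs of coordinates {i, n + 1 + i}.  Hence \<sigma> fixes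
   the middle coordinate and permutes the pairs, possibly swapping the two entries of some of
   them: \<sigma> is described by a permutation \<pi> of {0, ..., n - 1} together with the set u of
   swapped pairs.  For such \<sigma> a direct computation on the words (x + y, |x| + \<lambda>(y), x) shows
   that z + \<sigma>(V) is contained in V exactly when \<pi> preserves H and
   \<lambda>(y') + \<lambda>(y) + \<lambda>(y' + \<pi>(y)) = u \<cdot> y for all y in H. *)

theory Submission
  imports Defs
begin

definition parity :: "nat \<Rightarrow> (nat \<Rightarrow> bool) \<Rightarrow> bool" where
  "parity n P = odd (card {i. i < n \<and> P i})"

lemma parity_0 [simp]: "parity 0 P = False"
  by (simp add: parity_def)

lemma parity_Suc [simp]: "parity (Suc n) P = (parity n P \<noteq> P n)"
proof -
  have "{i. i < Suc n \<and> P i} = (if P n then insert n {i. i < n \<and> P i} else {i. i < n \<and> P i})"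
    by (auto simp: less_Suc_eq)
  then show ?thesis by (simp add: parity_def)
qed

lemma parity_cong: "(\<And>i. i < n \<Longrightarrow> P i = Q i) \<Longrightarrow> parity n P = parity n Q"
  by (induction n) auto

lemma parity_xor: "parity n (\<lambda>i. P i \<noteq> Q i) = (parity n P \<noteq> parity n Q)"
  by (induction n) auto

lemma parity_add: "parity (a + b) P = (parity a P \<noteq> parity b (\<lambda>i. P (a + i)))"
  by (induction b) auto

lemma parity_False [simp]: "parity n (\<lambda>_. False) = False"
  by (induction n) auto

lemma parity_single: "i < n \<Longrightarrow> parity n (\<lambda>j. P j \<and> j = i) = P i"
proof (induction n)
  case (Suc n)
  show ?case
  proof (cases "i = n")
    case True
    then have "parity n (\<lambda>j. P j \<and> j = i) = False"
      using parity_cong[of n _ "\<lambda>_. False"] by simp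
    with True show ?thesis by simp
  qed (use Suc in auto)
qed simp

lemma parity_permute:
  assumes "p permutes {..<n}"
  shows "parity n (\<lambda>i. P (p i)) = parity n P"
proof -
  have "p ` {i. i < n \<and> P (p i)} = {j. j < n \<and> P j}"
  proof safe
    fix j assume "j < n" "P j"
    then show "j \<in> p ` {i. i < n \<and> P (p i)}"
      using permutes_inverses(1)[OF assms, of j] permutes_in_image[OF assms, of "inv p j"]
      by (metis (mono_tags, lifting) image_eqI lessThan_iff mem_Collect_eq)
  qed (use permutes_in_image[OF assms] in auto)
  moreover have "inj_on p {i. i < n \<and> P (p i)}"
    using permutes_inj_on[OF assms] by blast
  ultimately show ?thesis
    unfolding parity_def by (metis card_image)
qed

lemma wpar_eq_parity: "wpar n x = parity n x"
  by (simp add: wpar_def parity_def)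

lemma sprod_eq_parity: "sprod n u y = parity n (\<lambda>i. u i \<and> y i)"
  by (simp add: sprod_def parity_def)

lemma vadd_apply [simp]: "vadd x y i = (x i \<noteq> y i)"
  by (simp add: vadd_def bxor_def)

lemma vadd_commute: "vadd x y = vadd y x"
  by (auto simp: fun_eq_iff)

lemma eq_vadd_iff: "a = vadd x y \<longleftrightarrow> y = vadd x a"
  by (auto simp: fun_eq_iff)

lemma vadd_zerov_left [simp]: "vadd zerov y = y"
  by (simp add: fun_eq_iff zerov_def)

lemma vadd_zerov_right [simp]: "vadd x zerov = x"
  by (simp add: fun_eq_iff zerov_def)

lemma vadd_cancel_left [simp]: "vadd x (vadd x y) = y"
  by (auto simp: fun_eq_iff)

lemma zerov_in_Fn [simp]: "zerov \<in> Fn n"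
  by (simp add: Fn_def zerov_def)

lemma vadd_in_Fn: "x \<in> Fn n \<Longrightarrow> y \<in> Fn n \<Longrightarrow> vadd x y \<in> Fn n"
  by (simp add: Fn_def)

lemma finite_Fn: "finite (Fn n)"
proof (rule finite_subset)
  show "Fn n \<subseteq> (\<lambda>S i. i \<in> S) ` Pow {..<n}"
  proof
    fix x assume "x \<in> Fn n"
    then have "{i. x i} \<in> Pow {..<n}" and "x = (\<lambda>i. i \<in> {i. x i})"
      by (auto simp: Fn_def not_le[symmetric])
    then show "x \<in> (\<lambda>S i. i \<in> S) ` Pow {..<n}"
      by blast
  qed
qed simp

lemma inj_pact: "\<pi> permutes S \<Longrightarrow> inj (pact \<pi>)"
  unfolding pact_def inj_def fun_eq_iff by (metis permutes_inverses(2))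

lemma pact_inv: "p permutes S \<Longrightarrow> pact (inv p) x = x \<circ> p"
  by (simp add: pact_def permutes_inv_inv fun_eq_iff)

lemma wpar_zerov [simp]: "wpar n zerov = False"
  by (simp add: wpar_eq_parity zerov_def)

lemma wpar_unit: "i < n \<Longrightarrow> wpar n (\<lambda>j. j = i)"
  using parity_single[of i n "\<lambda>_. True"] by (simp add: wpar_eq_parity)

lemma sprod_zerov [simp]: "sprod n u zerov = False"
  by (simp add: sprod_eq_parity zerov_def)

lemma sprod_unit: "i < n \<Longrightarrow> sprod n u (\<lambda>j. j = i) = u i"
  by (simp add: sprod_eq_parity parity_single)

lemma sprod_vadd: "sprod n u (vadd x y) = (sprod n u x \<noteq> sprod n u y)"
  unfolding sprod_eq_parity parity_xor[symmetric] by (rule parity_cong) auto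

lemma sprod_pact:
  assumes "\<sigma> permutes {..<m}"
  shows "sprod m T (pact \<sigma> v) = sprod m (T \<circ> \<sigma>) v"
proof -
  have "sprod m T (pact \<sigma> v) = parity m (\<lambda>i. T (\<sigma> (inv \<sigma> i)) \<and> v (inv \<sigma> i))"
    by (simp add: sprod_eq_parity pact_def permutes_inverses[OF assms])
  also have "\<dots> = sprod m (T \<circ> \<sigma>) v"
    using parity_permute[OF permutes_inv[OF assms], of "\<lambda>i. T (\<sigma> i) \<and> v i"]
    by (simp add: sprod_eq_parity)
  finally show ?thesis .
qed

lemma cat3_eq_iff:
  assumes "a \<in> Fn n" "c \<in> Fn n" "a' \<in> Fn n" "c' \<in> Fn n"
  shows "cat3 n a b c = cat3 n a' b' c' \<longleftrightarrow> a = a' \<and> b = b' \<and> c = c'"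
proof
  assume e: "cat3 n a b c = cat3 n a' b' c'"
  have "a i = a' i" "c i = c' i" for i
    using fun_cong[OF e, of i] fun_cong[OF e, of "n + 1 + i"] assms
    by (cases "i < n"; simp add: cat3_def Fn_def)+
  moreover have "b = b'"
    using fun_cong[OF e, of n] by (simp add: cat3_def)
  ultimately show "a = a' \<and> b = b' \<and> c = c'"
    by auto
qed simp

lemma cat3_in_Fn: "a \<in> Fn n \<Longrightarrow> c \<in> Fn n \<Longrightarrow> cat3 n a b c \<in> Fn (2 * n + 1)"
  by (auto simp: Fn_def cat3_def)

lemma split_cat3:
  "T \<in> Fn (2 * n + 1) \<Longrightarrow> T = cat3 n (\<lambda>i. i < n \<and> T i) (T n) (\<lambda>i. i < n \<and> T (n + 1 + i))"
  by (auto simp: Fn_def cat3_def fun_eq_iff)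

lemma vadd_cat3:
  "vadd (cat3 n a b c) (cat3 n a' b' c') = cat3 n (vadd a a') (bxor b b') (vadd c c')"
  by (auto simp: cat3_def bxor_def fun_eq_iff)

lemma sprod_cat3:
  "sprod (2 * n + 1) (cat3 n a b c) (cat3 n a' b' c') =
     ((sprod n a a' \<noteq> (b \<and> b')) \<noteq> sprod n c c')"
proof -
  have "2 * n + 1 = n + (1 + n)" by simp
  then have "sprod (2 * n + 1) (cat3 n a b c) (cat3 n a' b' c') =
      (parity n (\<lambda>i. cat3 n a b c i \<and> cat3 n a' b' c' i) \<noteq>
        (parity 1 (\<lambda>i. cat3 n a b c (n + i) \<and> cat3 n a' b' c' (n + i)) \<noteq>
         parity n (\<lambda>i. cat3 n a b c (n + (1 + i)) \<and> cat3 n a' b' c' (n + (1 + i)))))"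
    by (simp only: sprod_eq_parity parity_add)
  also have "\<dots> = ((sprod n a a' \<noteq> (b \<and> b')) \<noteq> sprod n c c')"
    unfolding sprod_eq_parity by (simp add: One_nat_def) (simp add: cat3_def cong: parity_cong, argo)
  finally show ?thesis .
qed

section \<open>Linear codes, duality and the code V_H^\<lambda>\<close>

definition linear_code :: "nat \<Rightarrow> bvec set \<Rightarrow> bool" where
  "linear_code n H \<longleftrightarrow> H \<subseteq> Fn n \<and> zerov \<in> H \<and> (\<forall>a\<in>H. \<forall>b\<in>H. vadd a b \<in> H)"

definition dual_code :: "nat \<Rightarrow> bvec set \<Rightarrow> bvec set" where
  "dual_code m D = {T \<in> Fn m. \<forall>v\<in>D. \<not> sprod m T v}"

lemma finite_linear_code: "linear_code n H \<Longrightarrow> finite H"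
  using finite_subset[OF _ finite_Fn] by (auto simp: linear_code_def)

lemma hamming_code_linear:
  assumes "hamming_code k H"
  shows "linear_code (2^k - 1) H"
proof -
  let ?n = "2^k - 1 :: nat"
  obtain c where H: "H = {x \<in> Fn ?n. \<forall>j<k. \<not> parity ?n (\<lambda>i. x i \<and> c i j)}"
    using assms by (auto simp: hamming_code_def parity_def)
  have "parity ?n (\<lambda>i. vadd x y i \<and> c i j) =
          (parity ?n (\<lambda>i. x i \<and> c i j) \<noteq> parity ?n (\<lambda>i. y i \<and> c i j))" for x y j
    unfolding parity_xor[symmetric] by (rule parity_cong) auto
  moreover have "parity ?n (\<lambda>i. zerov i \<and> c i j) = False" for j
    by (simp add: zerov_def)
  ultimately show ?thesis
    unfolding linear_code_def H by (auto simp: vadd_in_Fn)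
qed

definition separates :: "bvec set \<Rightarrow> nat set \<Rightarrow> bool" where
  "separates \<A> S \<longleftrightarrow> (\<forall>a\<in>S. \<forall>b\<in>S. a \<noteq> b \<longrightarrow> (\<exists>A\<in>\<A>. A a \<noteq> A b))"

text \<open>The columns of the check matrix, extended by a zero column at position n, are pairwise
  distinct.\<close>
lemma hamming_code_dual_separates:
  assumes "hamming_code k H" and n: "n = 2^k - 1"
  shows "separates (dual_code n H) {..n}"
  unfolding separates_def
proof (intro ballI impI)
  fix a b assume "a \<in> {..n}" "b \<in> {..n}" "a \<noteq> b"
  then have "a \<le> n" "b \<le> n" "a \<noteq> b"
    by auto
  obtain c where c: "bij_betw c {..<n} (Fn k - {zerov})"
    and H: "H = {x \<in> Fn n. \<forall>j<k. even (card {i. i < n \<and> x i \<and> c i j})}"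
    using assms(1) by (auto simp: hamming_code_def n)
  define col where "col i = (if i < n then c i else zerov)" for i
  have col_Fn: "col i \<in> Fn k" for i
    using c by (auto simp: col_def bij_betw_def)
  have "col a \<noteq> col b"
  proof (cases "a < n \<and> b < n")
    case True
    then show ?thesis
      using c \<open>a \<noteq> b\<close> by (auto simp: col_def bij_betw_def inj_on_def)
  next
    case False
    then have "col a \<noteq> zerov \<or> col b \<noteq> zerov"
      using c \<open>a \<le> n\<close> \<open>b \<le> n\<close> \<open>a \<noteq> b\<close> unfolding col_def bij_betw_def by force
    then show ?thesis
      using False \<open>a \<le> n\<close> \<open>b \<le> n\<close> \<open>a \<noteq> b\<close> by (auto simp: col_def)
  qed
  then obtain j where j: "col a j \<noteq> col b j"
    by (auto simp: fun_eq_iff)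
  then have "j < k"
    using col_Fn[of a] col_Fn[of b] by (auto simp: Fn_def not_less[symmetric])
  define A where "A i = (i < n \<and> c i j)" for i
  have "A \<in> dual_code n H"
  proof -
    have "sprod n A y = odd (card {i. i < n \<and> y i \<and> c i j})" for y
      unfolding sprod_def A_def by (rule arg_cong[where f = "\<lambda>S. odd (card S)"]) auto
    then show ?thesis
      using \<open>j < k\<close> by (auto simp: dual_code_def Fn_def A_def H)
  qed
  moreover have "A i = col i j" if "i \<le> n" for i
    using that by (auto simp: A_def col_def zerov_def)
  ultimately show "\<exists>A\<in>dual_code n H. A a \<noteq> A b"
    using j \<open>a \<le> n\<close> \<open>b \<le> n\<close> by (intro bexI[of _ A]) auto
qed

definition vhl_word :: "nat \<Rightarrow> (bvec \<Rightarrow> bool) \<Rightarrow> bvec \<Rightarrow> bvec \<Rightarrow> bvec" where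
  "vhl_word n lam x y = cat3 n (vadd x y) (bxor (wpar n x) (lam y)) x"

lemma mem_VHl_iff: "v \<in> VHl n H lam \<longleftrightarrow> (\<exists>x\<in>Fn n. \<exists>y\<in>H. v = vhl_word n lam x y)"
  unfolding VHl_def vhl_word_def by blast

lemma vhl_word_in_VHl: "x \<in> Fn n \<Longrightarrow> y \<in> H \<Longrightarrow> vhl_word n lam x y \<in> VHl n H lam"
  by (auto simp: mem_VHl_iff)

lemma vhl_word_zerov: "vhl_word n lam zerov y = cat3 n y (lam y) zerov"
  by (simp add: vhl_word_def bxor_def)

lemma cat3_in_VHl_iff:
  assumes "H \<subseteq> Fn n" "a \<in> Fn n" "c \<in> Fn n"
  shows "cat3 n a b c \<in> VHl n H lam \<longleftrightarrow>
           vadd a c \<in> H \<and> b = bxor (wpar n c) (lam (vadd a c))"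
proof -
  have "cat3 n a b c = vhl_word n lam x y \<longleftrightarrow>
          x = c \<and> y = vadd a c \<and> b = bxor (wpar n c) (lam (vadd a c))"
    if "x \<in> Fn n" "y \<in> H" for x y
  proof -
    have "y \<in> Fn n"
      using that assms(1) by blast
    have "cat3 n a b c = vhl_word n lam x y \<longleftrightarrow>
                 a = vadd x y \<and> b = bxor (wpar n x) (lam y) \<and> c = x"
      unfolding vhl_word_def by (rule cat3_eq_iff[OF assms(2,3) vadd_in_Fn[OF that(1) \<open>y \<in> Fn n\<close>] that(1)])
    also have "\<dots> \<longleftrightarrow> x = c \<and> y = vadd a c \<and> b = bxor (wpar n c) (lam (vadd a c))"
      by (auto simp: eq_vadd_iff vadd_commute)
    finally show ?thesis .
  qed
  then show ?thesis
    using assms(3) unfolding mem_VHl_iff by blast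
qed

lemma linear_on_sprod:
  assumes H: "linear_code n H" and lam: "\<And>y. y \<in> H \<Longrightarrow> lam y = sprod n A y"
  shows "linear_on H lam"
  unfolding linear_on_def bxor_def
proof (intro ballI)
  fix y y' assume "y \<in> H" "y' \<in> H"
  moreover from this have "vadd y y' \<in> H"
    using H by (simp add: linear_code_def)
  ultimately show "lam (vadd y y') = (lam y \<noteq> lam y')"
    by (simp add: lam sprod_vadd)
qed

lemma symmetric_word_in_dual_code_VHl:
  assumes A: "A \<in> dual_code n H"
  shows "cat3 n A False A \<in> dual_code (2 * n + 1) (VHl n H lam)"
proof -
  have "\<not> sprod (2 * n + 1) (cat3 n A False A) (vhl_word n lam x y)" if "y \<in> H" for x y
    using A that unfolding vhl_word_def sprod_cat3 by (simp add: dual_code_def sprod_vadd)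
  moreover have "cat3 n A False A \<in> Fn (2 * n + 1)"
    using A cat3_in_Fn unfolding dual_code_def by blast
  ultimately show ?thesis
    by (auto simp: dual_code_def mem_VHl_iff)
qed

lemma dual_code_VHl:
  assumes H: "linear_code n H" and "lam zerov = False" and "\<not> linear_on H lam"
  shows "dual_code (2 * n + 1) (VHl n H lam) = (\<lambda>A. cat3 n A False A) ` dual_code n H"
proof
  show "(\<lambda>A. cat3 n A False A) ` dual_code n H \<subseteq> dual_code (2 * n + 1) (VHl n H lam)"
    using symmetric_word_in_dual_code_VHl by blast
next
  show "dual_code (2 * n + 1) (VHl n H lam) \<subseteq> (\<lambda>A. cat3 n A False A) ` dual_code n H"
  proof
    fix T assume T: "T \<in> dual_code (2 * n + 1) (VHl n H lam)"
    define A where "A i = (i < n \<and> T i)" for i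
    define t where "t = T n"
    define C where "C i = (i < n \<and> T (n + 1 + i))" for i
    have T_eq: "T = cat3 n A t C"
      unfolding A_def t_def C_def using T by (intro split_cat3) (simp add: dual_code_def)
    have orth: "(sprod n A (vadd x y) \<noteq> (t \<and> bxor (wpar n x) (lam y))) = sprod n C x"
      if "x \<in> Fn n" "y \<in> H" for x y
    proof -
      have "\<not> sprod (2 * n + 1) T (vhl_word n lam x y)"
        using T vhl_word_in_VHl[OF that] unfolding dual_code_def by blast
      then show ?thesis
        unfolding T_eq vhl_word_def sprod_cat3 by simp
    qed
    \<comment> \<open>test T against the words (e_i, 1, e_i) and (y, \<lambda>(y), 0)\<close>
    have C_eq: "C i = (A i \<noteq> t)" if "i < n" for i
      using orth[of "\<lambda>j. j = i" zerov] that H assms(2)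
      by (simp add: linear_code_def Fn_def sprod_unit wpar_unit bxor_def)
    have A_on_H: "sprod n A y = (t \<and> lam y)" if "y \<in> H" for y
      using orth[of zerov y] that by (simp add: bxor_def)
    have "\<not> t"
      using linear_on_sprod[OF H, of lam A] A_on_H assms(3) by auto
    have "C = A"
      using \<open>\<not> t\<close> C_eq by (auto simp: A_def C_def fun_eq_iff)
    moreover have "A \<in> dual_code n H"
      using A_on_H \<open>\<not> t\<close> by (auto simp: dual_code_def A_def Fn_def)
    ultimately show "T \<in> (\<lambda>A. cat3 n A False A) ` dual_code n H"
      using T_eq \<open>\<not> t\<close> by auto
  qed
qed

section \<open>Permutations respecting the pairs of coordinates\<close>

text \<open>For i < n the coordinates i and n + 1 + i of F^(2n+1) form a pair; the middle coordinate n
  is a pair on its own.  pair_mirror swaps the two members of every pair, pair_flip n u those of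
  the pairs selected by u, and pair_lift n p permutes the pairs according to p.  Since vectors of
  Fn n vanish at n, the words (A, 0, A) are exactly A \<circ> pair_index n.\<close>

definition pair_mirror :: "nat \<Rightarrow> nat \<Rightarrow> nat" where
  "pair_mirror n i = (if i < n then n + 1 + i else if n < i \<and> i \<le> 2 * n then i - n - 1 else i)"

definition pair_index :: "nat \<Rightarrow> nat \<Rightarrow> nat" where
  "pair_index n i = (if i \<le> n then i else i - n - 1)"

definition pair_flip :: "nat \<Rightarrow> (nat \<Rightarrow> bool) \<Rightarrow> nat \<Rightarrow> nat" where
  "pair_flip n u i = (if u (pair_index n i) then pair_mirror n i else i)"

definition pair_lift :: "nat \<Rightarrow> (nat \<Rightarrow> nat) \<Rightarrow> nat \<Rightarrow> nat" where
  "pair_lift n p i = (if i < n then p i else if n < i \<and> i \<le> 2 * n then n + 1 + p (i - n - 1) else i)"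

lemma pair_mirror_mirror [simp]: "pair_mirror n (pair_mirror n i) = i"
  by (auto simp: pair_mirror_def)

lemma pair_mirror_self [simp]: "pair_mirror n n = n"
  by (simp add: pair_mirror_def)

lemma pair_index_eq_self [simp]: "i \<le> n \<Longrightarrow> pair_index n i = i"
  by (simp add: pair_index_def)

lemma pair_index_mirror [simp]: "pair_index n (pair_mirror n i) = pair_index n i"
  by (auto simp: pair_mirror_def pair_index_def)

lemma pair_mirror_less_iff: "pair_mirror n i < 2 * n + 1 \<longleftrightarrow> i < 2 * n + 1"
  by (auto simp: pair_mirror_def)

lemma pair_mirror_eq_self_iff: "i < 2 * n + 1 \<Longrightarrow> pair_mirror n i = i \<longleftrightarrow> i = n"
  by (auto simp: pair_mirror_def)

lemma pair_index_le: "i < 2 * n + 1 \<Longrightarrow> pair_index n i \<le> n"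
  by (auto simp: pair_index_def)

lemma pair_index_eq_iff:
  "a < 2 * n + 1 \<Longrightarrow> b < 2 * n + 1 \<Longrightarrow>
     pair_index n a = pair_index n b \<longleftrightarrow> b = a \<or> b = pair_mirror n a"
  by (auto simp: pair_index_def pair_mirror_def)

lemma cat3_symmetric: "A \<in> Fn n \<Longrightarrow> cat3 n A False A = A \<circ> pair_index n"
  by (auto simp: fun_eq_iff cat3_def pair_index_def Fn_def)

lemma pair_flip_permutes: "pair_flip n u permutes {..<2 * n + 1}"
proof (rule bij_imp_permutes)
  have "pair_flip n u (pair_flip n u i) = i" for i
    by (simp add: pair_flip_def)
  moreover have "pair_flip n u i < 2 * n + 1 \<longleftrightarrow> i < 2 * n + 1" for i
    using pair_mirror_less_iff by (simp add: pair_flip_def)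
  ultimately show "bij_betw (pair_flip n u) {..<2 * n + 1} {..<2 * n + 1}"
    by (intro bij_betw_byWitness[where f' = "pair_flip n u"]) auto
  show "pair_flip n u i = i" if "i \<notin> {..<2 * n + 1}" for i
    using that by (auto simp: pair_flip_def pair_mirror_def)
qed

lemma pair_lift_permutes:
  assumes p: "p permutes {..<n}"
  shows "pair_lift n p permutes {..<2 * n + 1}"
proof (rule inj_imp_permutes)
  have p_less: "p i < n \<longleftrightarrow> i < n" for i
    using permutes_in_image[OF p] by simp
  have "pair_lift n (inv p) (pair_lift n p i) = i" for i
  proof (cases "n < i \<and> i \<le> 2 * n")
    case True
    then have "p (i - n - 1) < n"
      by (subst p_less) linarith
    then show ?thesis
      using True by (simp add: pair_lift_def permutes_inverses(2)[OF p])
  next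
    case False
    then show ?thesis
      using p_less[of i] by (cases "i < n") (auto simp: pair_lift_def permutes_inverses(2)[OF p])
  qed
  then show "inj_on (pair_lift n p) {..<2 * n + 1}"
    by (rule inj_on_inverseI)
  show "pair_lift n p i \<in> {..<2 * n + 1}" if "i \<in> {..<2 * n + 1}" for i
    using that p_less[of i] p_less[of "i - n - 1"] by (auto simp: pair_lift_def)
qed (auto simp: pair_lift_def)

lemma cat3_comp_pair_flip:
  "cat3 n a b c \<circ> pair_flip n u =
     cat3 n (\<lambda>i. if u i then c i else a i) b (\<lambda>i. if u i then a i else c i)"
  by (auto simp: fun_eq_iff cat3_def pair_flip_def pair_index_def pair_mirror_def)

lemma cat3_comp_pair_lift:
  assumes "p permutes {..<n}"
  shows "cat3 n a b c \<circ> pair_lift n p = cat3 n (a \<circ> p) b (c \<circ> p)"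
proof
  fix i
  have p_less: "p j < n" if "j < n" for j
    using that permutes_in_image[OF assms] by simp
  show "(cat3 n a b c \<circ> pair_lift n p) i = cat3 n (a \<circ> p) b (c \<circ> p) i"
    using p_less[of i] p_less[of "i - n - 1"] by (auto simp: cat3_def pair_lift_def; linarith)
qed

lemma permutes_inv_comm:
  assumes "\<sigma> permutes S" and "\<sigma> \<circ> m = m \<circ> \<sigma>"
  shows "inv \<sigma> \<circ> m = m \<circ> inv \<sigma>"
proof -
  have "inv \<sigma> \<circ> m = inv \<sigma> \<circ> (m \<circ> \<sigma>) \<circ> inv \<sigma>"
    by (simp add: comp_assoc permutes_inv_o(1)[OF assms(1)])
  also have "\<dots> = m \<circ> inv \<sigma>"
    by (simp add: assms(2)[symmetric] comp_assoc[symmetric] permutes_inv_o(2)[OF assms(1)])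
  finally show ?thesis .
qed

lemma pair_index_comp_eq:
  assumes \<sigma>: "\<sigma> permutes {..<2 * n + 1}" and sep: "separates \<A> {..n}"
    and sym: "\<And>A. A \<in> \<A> \<Longrightarrow> \<exists>A'\<in>Fn n. A \<circ> pair_index n \<circ> \<sigma> = A' \<circ> pair_index n"
    and ij: "i < 2 * n + 1" "j < 2 * n + 1" "pair_index n i = pair_index n j"
  shows "pair_index n (\<sigma> i) = pair_index n (\<sigma> j)"
proof (rule ccontr)
  assume "pair_index n (\<sigma> i) \<noteq> pair_index n (\<sigma> j)"
  moreover have "pair_index n (\<sigma> i) \<le> n" "pair_index n (\<sigma> j) \<le> n"
    using ij permutes_in_image[OF \<sigma>] by (simp_all add: pair_index_le)
  ultimately obtain A where "A \<in> \<A>" "A (pair_index n (\<sigma> i)) \<noteq> A (pair_index n (\<sigma> j))"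
    using sep by (auto simp: separates_def)
  moreover obtain A' where "A \<circ> pair_index n \<circ> \<sigma> = A' \<circ> pair_index n"
    using sym[OF \<open>A \<in> \<A>\<close>] by blast
  ultimately show False
    using ij(3) by (metis comp_apply)
qed

lemma fixes_middle_if_symmetric:
  assumes \<sigma>: "\<sigma> permutes {..<2 * n + 1}" and "\<A> \<subseteq> Fn n" and sep: "separates \<A> {..n}"
    and sym: "\<And>A. A \<in> \<A> \<Longrightarrow> \<exists>A'\<in>Fn n. A \<circ> pair_index n \<circ> \<sigma> = A' \<circ> pair_index n"
  shows "\<sigma> n = n"
proof -
  have \<sigma>n: "\<sigma> n < 2 * n + 1"
    using permutes_in_image[OF \<sigma>] by simp
  have "pair_index n (\<sigma> n) = n"
  proof (rule ccontr)
    assume "pair_index n (\<sigma> n) \<noteq> n"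
    moreover have "pair_index n (\<sigma> n) \<le> n"
      using \<sigma>n by (rule pair_index_le)
    ultimately obtain A where A: "A \<in> \<A>" "A (pair_index n (\<sigma> n)) \<noteq> A n"
      using sep by (auto simp: separates_def)
    obtain A' where A': "A' \<in> Fn n" "A \<circ> pair_index n \<circ> \<sigma> = A' \<circ> pair_index n"
      using sym[OF A(1)] by blast
    then have "A (pair_index n (\<sigma> n)) = A' n"
      by (metis comp_apply order_refl pair_index_eq_self)
    then show False
      using A A'(1) \<open>\<A> \<subseteq> Fn n\<close> by (auto simp: Fn_def)
  qed
  then show ?thesis
    using \<sigma>n pair_index_eq_iff[of n n "\<sigma> n"] by auto
qed

lemma commutes_with_pair_mirror:
  assumes \<sigma>: "\<sigma> permutes {..<2 * n + 1}" and "\<A> \<subseteq> Fn n" and sep: "separates \<A> {..n}"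
    and sym: "\<And>A. A \<in> \<A> \<Longrightarrow> \<exists>A'\<in>Fn n. A \<circ> pair_index n \<circ> \<sigma> = A' \<circ> pair_index n"
  shows "\<sigma> \<circ> pair_mirror n = pair_mirror n \<circ> \<sigma>"
proof
  fix i
  show "(\<sigma> \<circ> pair_mirror n) i = (pair_mirror n \<circ> \<sigma>) i"
  proof (cases "i < 2 * n + 1")
    case True
    have "pair_index n (\<sigma> (pair_mirror n i)) = pair_index n (\<sigma> i)"
      using True pair_index_comp_eq[OF \<sigma> sep sym, of "pair_mirror n i" i] pair_mirror_less_iff[of n i]
      by simp
    then have "\<sigma> (pair_mirror n i) = \<sigma> i \<or> \<sigma> (pair_mirror n i) = pair_mirror n (\<sigma> i)"
      using pair_index_eq_iff[of "\<sigma> i" n "\<sigma> (pair_mirror n i)"] True pair_mirror_less_iff[of n i]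
        permutes_in_image[OF \<sigma>, of i] permutes_in_image[OF \<sigma>, of "pair_mirror n i"] by auto
    moreover have "pair_mirror n i = i" if "\<sigma> (pair_mirror n i) = \<sigma> i"
      using that permutes_inj[OF \<sigma>] by (simp add: inj_eq)
    ultimately show ?thesis
      using True pair_mirror_eq_self_iff[of i n] fixes_middle_if_symmetric[OF assms] by auto
  next
    case False
    then show ?thesis
      using permutes_not_in[OF \<sigma>] by (simp add: pair_mirror_def)
  qed
qed

lemma pair_mirror_commuting_fixes_middle:
  assumes \<sigma>: "\<sigma> permutes {..<2 * n + 1}" and comm: "\<sigma> \<circ> pair_mirror n = pair_mirror n \<circ> \<sigma>"
  shows "\<sigma> n = n"
proof -
  have "pair_mirror n (\<sigma> n) = \<sigma> n"
    using fun_cong[OF comm, of n] by simp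
  then show ?thesis
    using permutes_in_image[OF \<sigma>, of n] pair_mirror_eq_self_iff[of "\<sigma> n" n] by simp
qed

lemma pair_mirror_commuting_eqI:
  assumes \<sigma>: "\<sigma> permutes {..<2 * n + 1}" and comm: "\<sigma> \<circ> pair_mirror n = pair_mirror n \<circ> \<sigma>"
    and p: "p permutes {..<n}"
    and low: "\<And>j. j < n \<Longrightarrow> \<sigma> j = (if u (p j) then pair_mirror n (p j) else p j)"
  shows "\<sigma> = pair_flip n u \<circ> pair_lift n p"
proof
  fix i
  have p_less: "p j < n" if "j < n" for j
    using that permutes_in_image[OF p] by simp
  consider "i < n" | "i = n" | "n < i" "i \<le> 2 * n" | "2 * n < i"
    by linarith
  then show "\<sigma> i = (pair_flip n u \<circ> pair_lift n p) i"
  proof cases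
    case 1
    then show ?thesis
      using low[OF 1] p_less[OF 1] by (simp add: pair_flip_def pair_lift_def)
  next
    case 2
    then show ?thesis
      using pair_mirror_commuting_fixes_middle[OF \<sigma> comm] by (simp add: pair_flip_def pair_lift_def)
  next
    case 3
    define j where "j = i - n - 1"
    have j: "j < n" "i = pair_mirror n j"
      using 3 by (auto simp: j_def pair_mirror_def)
    have "pair_lift n p (pair_mirror n j) = pair_mirror n (p j)"
      using j(1) p_less[OF j(1)] by (simp add: pair_mirror_def pair_lift_def)
    moreover have "\<sigma> (pair_mirror n j) = pair_mirror n (\<sigma> j)"
      using fun_cong[OF comm, of j] by simp
    ultimately show ?thesis
      unfolding j(2) comp_apply using low[OF j(1)] p_less[OF j(1)] by (auto simp: pair_flip_def)
  next
    case 4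
    then show ?thesis
      using permutes_not_in[OF \<sigma>] by (simp add: pair_flip_def pair_lift_def pair_mirror_def)
  qed
qed

lemma pair_mirror_commuting_decomposition:
  assumes \<sigma>: "\<sigma> permutes {..<2 * n + 1}" and comm: "\<sigma> \<circ> pair_mirror n = pair_mirror n \<circ> \<sigma>"
  obtains p u where "p permutes {..<n}" "u \<in> Fn n" "\<sigma> = pair_flip n u \<circ> pair_lift n p"
proof -
  have \<sigma>_mirror: "\<sigma> (pair_mirror n i) = pair_mirror n (\<sigma> i)" for i
    using fun_cong[OF comm, of i] by simp
  define p where "p j = (if j < n then pair_index n (\<sigma> j) else j)" for j
  define u where "u i = (i < n \<and> n < \<sigma> (inv p i))" for i
  have \<sigma>_low: "\<sigma> j = (if n < \<sigma> j then pair_mirror n (p j) else p j)" and p_less: "p j < n"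
    if "j < n" for j
  proof -
    have "\<sigma> j \<noteq> n"
      using that pair_mirror_commuting_fixes_middle[OF \<sigma> comm] permutes_inj[OF \<sigma>]
      by (metis inj_eq less_irrefl)
    then show "\<sigma> j = (if n < \<sigma> j then pair_mirror n (p j) else p j)" "p j < n"
      using that permutes_in_image[OF \<sigma>, of j] by (auto simp: p_def pair_index_def pair_mirror_def)
  qed
  have p: "p permutes {..<n}"
  proof (rule inj_imp_permutes)
    show "inj_on p {..<n}"
    proof (rule inj_onI)
      fix j j' assume j: "j \<in> {..<n}" "j' \<in> {..<n}" and "p j = p j'"
      then have "\<sigma> j' = \<sigma> j \<or> \<sigma> j' = \<sigma> (pair_mirror n j)"
        using permutes_in_image[OF \<sigma>, of j] permutes_in_image[OF \<sigma>, of j']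
          pair_index_eq_iff[of "\<sigma> j" n "\<sigma> j'"]
        by (simp add: p_def \<sigma>_mirror)
      then have "j' = j \<or> j' = pair_mirror n j"
        using permutes_inj[OF \<sigma>] by (auto simp: inj_eq)
      then show "j = j'"
        using j by (auto simp: pair_mirror_def)
    qed
  qed (simp_all add: p_less, simp add: p_def)
  have "u (p j) = (n < \<sigma> j)" if "j < n" for j
    using that p_less[OF that] by (simp add: u_def permutes_inverses(2)[OF p])
  then have "\<sigma> = pair_flip n u \<circ> pair_lift n p"
    using \<sigma>_low by (intro pair_mirror_commuting_eqI[OF \<sigma> comm p]) simp
  moreover have "u \<in> Fn n"
    by (simp add: u_def Fn_def)
  ultimately show ?thesis
    using p that by blast
qed

section \<open>Translators of V_H^\<lambda>\<close>

lemma mem_TrI: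
  assumes "finite D" "z \<in> D" and \<tau>: "\<tau> permutes {..<m}"
    and transl: "\<And>v. v \<in> D \<Longrightarrow> vadd z (v \<circ> \<tau>) \<in> D"
  shows "z \<in> Tr m D"
proof -
  have \<sigma>: "inv \<tau> permutes {..<m}"
    using permutes_inv[OF \<tau>] .
  have "inj (vadd z \<circ> pact (inv \<tau>))"
    using inj_pact[OF \<sigma>] by (intro inj_compose) (auto intro: inj_on_inverseI[of _ "vadd z"])
  then have "(vadd z \<circ> pact (inv \<tau>)) ` D = D"
    using assms by (intro endo_inj_surj) (auto simp: pact_inv[OF \<tau>] intro: inj_on_subset)
  then show ?thesis
    using \<open>z \<in> D\<close> \<sigma> by (auto simp: Tr_def image_comp)
qed

lemma mem_Sym_iff:
  assumes "finite H"
  shows "\<pi> \<in> Sym n H \<longleftrightarrow> \<pi> permutes {..<n} \<and> (\<forall>y\<in>H. pact \<pi> y \<in> H)"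
proof -
  have "pact \<pi> ` H = H" if "\<pi> permutes {..<n}" "\<forall>y\<in>H. pact \<pi> y \<in> H"
    using that assms inj_pact[OF that(1)] by (intro endo_inj_surj) (auto intro: inj_on_subset)
  then show ?thesis
    by (auto simp: Sym_def)
qed

lemma dual_code_comp_perm:
  assumes \<sigma>: "\<sigma> permutes {..<m}" and "z \<in> D"
    and transl: "vadd z ` pact \<sigma> ` D \<subseteq> D" and T: "T \<in> dual_code m D"
  shows "T \<circ> \<sigma> \<in> dual_code m D"
proof -
  have "\<not> sprod m (T \<circ> \<sigma>) v" if "v \<in> D" for v
  proof -
    have "sprod m T (vadd z (pact \<sigma> v)) = (sprod m T z \<noteq> sprod m T (pact \<sigma> v))"
      by (rule sprod_vadd)
    then show ?thesis
      using T transl that \<open>z \<in> D\<close> sprod_pact[OF \<sigma>] by (auto simp: dual_code_def)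
  qed
  moreover have "T \<circ> \<sigma> \<in> Fn m"
    using T permutes_not_in[OF \<sigma>] by (auto simp: dual_code_def Fn_def)
  ultimately show ?thesis
    by (simp add: dual_code_def)
qed

lemma finite_VHl: "finite H \<Longrightarrow> finite (VHl n H lam)"
proof -
  assume "finite H"
  have "VHl n H lam = (\<lambda>(x, y). vhl_word n lam x y) ` (Fn n \<times> H)"
    by (auto simp: mem_VHl_iff; blast)
  then show ?thesis
    using \<open>finite H\<close> finite_Fn by simp
qed

lemma translated_vhl_word_in_VHl_iff:
  assumes H: "linear_code n H" and "y' \<in> H" "x \<in> Fn n" "y \<in> H" and \<pi>: "\<pi> permutes {..<n}"
  shows "vadd (cat3 n y' (lam y') zerov) (vhl_word n lam x y \<circ> (pair_flip n u \<circ> pair_lift n (inv \<pi>)))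
            \<in> VHl n H lam \<longleftrightarrow>
         pact \<pi> y \<in> H \<and> bxor (bxor (lam y') (lam y)) (lam (vadd y' (pact \<pi> y))) = sprod n u y"
proof -
  define p where "p = inv \<pi>"
  have p: "p permutes {..<n}"
    unfolding p_def using permutes_inv[OF \<pi>] .
  have HF: "H \<subseteq> Fn n"
    using H by (simp add: linear_code_def)
  have yF: "y \<in> Fn n" "y' \<in> Fn n"
    using assms HF by auto
  define F where "F = (\<lambda>i. if u (p i) then x (p i) else vadd x y (p i))"
  define L where "L = (\<lambda>i. if u (p i) then vadd x y (p i) else x (p i))"
  define b where "b = bxor (wpar n x) (lam y)"
  have "vhl_word n lam x y \<circ> (pair_flip n u \<circ> pair_lift n p) = cat3 n F b L"
    unfolding vhl_word_def comp_assoc[symmetric] cat3_comp_pair_flip cat3_comp_pair_lift[OF p]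
    by (simp add: F_def L_def b_def comp_def if_distrib)
  then have word: "vadd (cat3 n y' (lam y') zerov) (vhl_word n lam x y \<circ> (pair_flip n u \<circ> pair_lift n p))
                     = cat3 n (vadd y' F) (bxor (lam y') b) L"
    by (simp add: vadd_cat3)
  have FL_Fn: "vadd y' F \<in> Fn n" "L \<in> Fn n"
    using yF \<open>x \<in> Fn n\<close> permutes_not_in[OF p] by (auto simp: Fn_def F_def L_def)
  have pact_y: "pact \<pi> y = y \<circ> p"
    by (simp add: pact_def p_def comp_def)
  have sum: "vadd (vadd y' F) L = vadd y' (pact \<pi> y)"
    by (auto simp: fun_eq_iff F_def L_def pact_y)
  have "wpar n L = parity n (\<lambda>i. x (p i) \<noteq> (u (p i) \<and> y (p i)))"
    unfolding wpar_eq_parity by (rule parity_cong) (auto simp: L_def)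
  also have "\<dots> = (wpar n x \<noteq> sprod n u y)"
    unfolding parity_xor wpar_eq_parity sprod_eq_parity
    using parity_permute[OF p, of x] parity_permute[OF p, of "\<lambda>i. u i \<and> y i"] by simp
  finally have wpar_L: "wpar n L = (wpar n x \<noteq> sprod n u y)" .
  have "vadd y' (pact \<pi> y) \<in> H \<longleftrightarrow> pact \<pi> y \<in> H"
    using H \<open>y' \<in> H\<close> unfolding linear_code_def by (metis vadd_cancel_left)
  then show ?thesis
    unfolding p_def[symmetric] word cat3_in_VHl_iff[OF HF FL_Fn] sum wpar_L b_def bxor_def
    by auto
qed

lemma pair_perm_translates_VHl_iff:
  assumes H: "linear_code n H" and "y' \<in> H" and \<pi>: "\<pi> permutes {..<n}"
  shows "(\<forall>v\<in>VHl n H lam. vadd (cat3 n y' (lam y') zerov) (v \<circ> (pair_flip n u \<circ> pair_lift n (inv \<pi>)))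
            \<in> VHl n H lam) \<longleftrightarrow>
         (\<forall>y\<in>H. pact \<pi> y \<in> H \<and> bxor (bxor (lam y') (lam y)) (lam (vadd y' (pact \<pi> y))) = sprod n u y)"
proof
  assume "\<forall>v\<in>VHl n H lam. vadd (cat3 n y' (lam y') zerov)
            (v \<circ> (pair_flip n u \<circ> pair_lift n (inv \<pi>))) \<in> VHl n H lam"
  then show "\<forall>y\<in>H. pact \<pi> y \<in> H \<and>
               bxor (bxor (lam y') (lam y)) (lam (vadd y' (pact \<pi> y))) = sprod n u y"
    using translated_vhl_word_in_VHl_iff[OF H \<open>y' \<in> H\<close> zerov_in_Fn _ \<pi>] vhl_word_in_VHl[OF zerov_in_Fn]
    by blast
next
  assume "\<forall>y\<in>H. pact \<pi> y \<in> H \<and>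
            bxor (bxor (lam y') (lam y)) (lam (vadd y' (pact \<pi> y))) = sprod n u y"
  then show "\<forall>v\<in>VHl n H lam. vadd (cat3 n y' (lam y') zerov)
               (v \<circ> (pair_flip n u \<circ> pair_lift n (inv \<pi>))) \<in> VHl n H lam"
    using translated_vhl_word_in_VHl_iff[OF H \<open>y' \<in> H\<close> _ _ \<pi>] by (auto simp: mem_VHl_iff)
qed

lemma translating_perm_commutes_with_pair_mirror:
  assumes ham: "hamming_code k H" and n: "n = 2^k - 1"
    and "lam zerov = False" and "\<not> linear_on H lam"
    and \<sigma>: "\<sigma> permutes {..<2 * n + 1}" and z: "z \<in> VHl n H lam"
    and transl: "vadd z ` pact \<sigma> ` VHl n H lam \<subseteq> VHl n H lam"
  shows "\<sigma> \<circ> pair_mirror n = pair_mirror n \<circ> \<sigma>"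
proof -
  have H: "linear_code n H"
    using hamming_code_linear[OF ham] n by simp
  note dual_V = dual_code_VHl[OF H assms(3,4)]
  have "\<exists>A'\<in>Fn n. A \<circ> pair_index n \<circ> \<sigma> = A' \<circ> pair_index n" if A: "A \<in> dual_code n H" for A
  proof -
    have "cat3 n A False A \<in> dual_code (2 * n + 1) (VHl n H lam)"
      using A dual_V by blast
    then have "cat3 n A False A \<circ> \<sigma> \<in> dual_code (2 * n + 1) (VHl n H lam)"
      by (rule dual_code_comp_perm[OF \<sigma> z transl])
    then have "cat3 n A False A \<circ> \<sigma> \<in> (\<lambda>A. cat3 n A False A) ` dual_code n H"
      by (simp only: dual_V)
    then show ?thesis
      using A cat3_symmetric by (force simp: dual_code_def)
  qed
  then show ?thesis
    using hamming_code_dual_separates[OF ham n]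
    by (intro commutes_with_pair_mirror[OF \<sigma>, of "dual_code n H"]) (auto simp: dual_code_def)
qed

lemma translator_VHl_iff_pair_perm:
  assumes ham: "hamming_code k H" and n: "n = 2^k - 1"
    and "lam zerov = False" and "\<not> linear_on H lam" and "y' \<in> H"
  defines "z \<equiv> cat3 n y' (lam y') zerov"
  shows "z \<in> Tr (2 * n + 1) (VHl n H lam) \<longleftrightarrow>
         (\<exists>\<pi>. \<pi> permutes {..<n} \<and> (\<exists>u\<in>Fn n. \<forall>v\<in>VHl n H lam.
            vadd z (v \<circ> (pair_flip n u \<circ> pair_lift n (inv \<pi>))) \<in> VHl n H lam))"
proof -
  let ?V = "VHl n H lam"
  have H: "linear_code n H"
    using hamming_code_linear[OF ham] n by simp
  have z: "z \<in> ?V"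
    using vhl_word_in_VHl[OF zerov_in_Fn \<open>y' \<in> H\<close>] by (simp add: z_def vhl_word_zerov)
  show ?thesis
  proof
    assume "z \<in> Tr (2 * n + 1) ?V"
    then obtain \<sigma> where \<sigma>: "\<sigma> permutes {..<2 * n + 1}" and transl: "vadd z ` pact \<sigma> ` ?V = ?V"
      by (auto simp: Tr_def)
    have "\<sigma> \<circ> pair_mirror n = pair_mirror n \<circ> \<sigma>"
      using transl by (intro translating_perm_commutes_with_pair_mirror[OF ham n assms(3,4) \<sigma> z]) simp
    then obtain p u where p: "p permutes {..<n}" and "u \<in> Fn n"
      and \<sigma>_inv: "inv \<sigma> = pair_flip n u \<circ> pair_lift n p"
      using pair_mirror_commuting_decomposition[OF permutes_inv[OF \<sigma>] permutes_inv_comm[OF \<sigma>]]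
      by blast
    have "vadd z (v \<circ> (pair_flip n u \<circ> pair_lift n (inv (inv p)))) \<in> ?V" if "v \<in> ?V" for v
      using that transl \<sigma>_inv permutes_inv_inv[OF p] by (auto simp: pact_def comp_def)
    then show "\<exists>\<pi>. \<pi> permutes {..<n} \<and> (\<exists>u\<in>Fn n. \<forall>v\<in>?V.
                  vadd z (v \<circ> (pair_flip n u \<circ> pair_lift n (inv \<pi>))) \<in> ?V)"
      using permutes_inv[OF p] \<open>u \<in> Fn n\<close> by blast
  next
    assume "\<exists>\<pi>. \<pi> permutes {..<n} \<and> (\<exists>u\<in>Fn n. \<forall>v\<in>?V.
              vadd z (v \<circ> (pair_flip n u \<circ> pair_lift n (inv \<pi>))) \<in> ?V)"
    then obtain \<pi> u where \<pi>: "\<pi> permutes {..<n}"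
      and transl: "\<And>v. v \<in> ?V \<Longrightarrow> vadd z (v \<circ> (pair_flip n u \<circ> pair_lift n (inv \<pi>))) \<in> ?V"
      by blast
    have "pair_flip n u \<circ> pair_lift n (inv \<pi>) permutes {..<2 * n + 1}"
      by (intro permutes_compose pair_flip_permutes pair_lift_permutes permutes_inv[OF \<pi>])
    then show "z \<in> Tr (2 * n + 1) ?V"
      by (rule mem_TrI[OF finite_VHl[OF finite_linear_code[OF H]] z]) (simp add: transl)
  qed
qed

theorem corollary1:
  fixes k n :: nat and H :: "bvec set" and lam :: "bvec \<Rightarrow> bool" and y' :: bvec
  assumes "n = 2^k - 1"
    and "hamming_code k H"
    and "lam zerov = False"
    and "\<not> linear_on H lam"
    and "y' \<in> H"
  shows "cat3 n y' (lam y') zerov \<in> Tr (2*n+1) (VHl n H lam) \<longleftrightarrow>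
         (\<exists>\<pi>\<in>Sym n H. \<exists>u\<in>Fn n. \<forall>y\<in>H.
            bxor (bxor (lam y') (lam y)) (lam (vadd y' (pact \<pi> y))) = sprod n u y)"
proof -
  have H: "linear_code n H"
    using hamming_code_linear assms(1,2) by simp
  have "cat3 n y' (lam y') zerov \<in> Tr (2*n+1) (VHl n H lam) \<longleftrightarrow>
         (\<exists>\<pi>. \<pi> permutes {..<n} \<and> (\<exists>u\<in>Fn n. \<forall>y\<in>H. pact \<pi> y \<in> H \<and>
            bxor (bxor (lam y') (lam y)) (lam (vadd y' (pact \<pi> y))) = sprod n u y))"
    unfolding translator_VHl_iff_pair_perm[OF assms(2,1,3-5)]
    using pair_perm_translates_VHl_iff[OF H assms(5)] by blast
  also have "\<dots> \<longleftrightarrow> (\<exists>\<pi>\<in>Sym n H. \<exists>u\<in>Fn n. \<forall>y\<in>H.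
            bxor (bxor (lam y') (lam y)) (lam (vadd y' (pact \<pi> y))) = sprod n u y)"
    using mem_Sym_iff[OF finite_linear_code[OF H]] by blast
  finally show ?thesis .
qed

end
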